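(* Let $k$ be an integer with $0\leq k\leq n-1$ such that $\gcd(k,n)$ is a power of $2$ (possibly $1$). Then there exists $N\geq 0$ such that $c_k^N\in(e_0)$, the two-sided ideal of $A\#C_n$ generated by $e_0$.
   Context: $\Bbbk$ is an algebraically closed field of characteristic zero, $n\ge 2$, $A=\Bbbk_{-1}[x_0,\dots,x_{n-1}]$ is generated by degree-one $x_0,\dots,x_{n-1}$ with $x_ix_j=-x_jx_i$ ($i\ne j$), $C_n=\langle\sigma\rangle$ acts by $\sigma(x_i)=x_{i+1}$ (indices in $\mathbb{Z}_n$), and $A\#C_n$ is the skew group algebra. Let $\omega$ be a primitive $n$th root of unity, $b_\gamma=\frac1n\sum_{i=0}^{n-1}\omega^{i\gamma}x_i$, $e_\alpha=\frac1n\sum_{i=0}^{n-1}(\omega^\alpha\sigma)^i$, and $c_j=b_kb_{j-k}+b_{j-k}b_k$ (independent of $k$) for $\alpha,\gamma,j\in\mathbb{Z}_n$. In particular $e_0=\frac1n\sum_{g\in C_n}g$. Here $\gcd(0,n)=n$. *)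

theory Defs
  imports "HOL-Computational_Algebra.Polynomial"
begin

text \<open>Concrete model of the skew group algebra A # C_n, A = k_{-1}[x_0..x_{n-1}].
  Basis: x^a sigma^s with a an exponent list of length n (ordered monomial
  x_0^{a_0} ... x_{n-1}^{a_{n-1}}) and s < n.\<close>

type_synonym skey = "nat list \<times> nat"
type_synonym 'k skel = "skey \<Rightarrow> 'k"

definition valid_key :: "nat \<Rightarrow> skey \<Rightarrow> bool" where
  "valid_key n p \<longleftrightarrow> length (fst p) = n \<and> snd p < n"

definition sk_carrier :: "nat \<Rightarrow> ('k::zero) skel set" where
  "sk_carrier n = {f. finite {p. f p \<noteq> 0} \<and> (\<forall>p. f p \<noteq> 0 \<longrightarrow> valid_key n p)}"

text \<open>sigma^s (x^b) as a product x_s^{b_0} x_{s+1}^{b_1} ..., reordered; exponent part:\<close>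
definition shift_exp :: "nat \<Rightarrow> nat \<Rightarrow> nat list \<Rightarrow> nat list" where
  "shift_exp n s b = map (\<lambda>j. b ! ((j + n - s) mod n)) [0..<n]"

text \<open>number of transpositions of anticommuting variables needed to reorder
  prod_i x_{(i+s) mod n}^{b_i} (i ascending) into standard order\<close>
definition sign_sigma :: "nat \<Rightarrow> nat \<Rightarrow> nat list \<Rightarrow> nat" where
  "sign_sigma n s b = (\<Sum>i<n. \<Sum>j<n.
      if i < j \<and> (j + s) mod n < (i + s) mod n then b ! i * b ! j else 0)"

text \<open>x^a x^b = (-1)^(sum_{i>j} a_i b_j) x^(a+b)\<close>
definition sign_mono :: "nat \<Rightarrow> nat list \<Rightarrow> nat list \<Rightarrow> nat" where
  "sign_mono n a b = (\<Sum>i<n. \<Sum>j<i. a ! i * b ! j)"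

definition key_mult :: "nat \<Rightarrow> skey \<Rightarrow> skey \<Rightarrow> skey" where
  "key_mult n p q = (map (\<lambda>(u, v). u + v) (zip (fst p) (shift_exp n (snd p) (fst q))),
                     (snd p + snd q) mod n)"

definition coef_mult :: "nat \<Rightarrow> skey \<Rightarrow> skey \<Rightarrow> 'k::comm_ring_1" where
  "coef_mult n p q = (-1) ^ (sign_sigma n (snd p) (fst q)
                            + sign_mono n (fst p) (shift_exp n (snd p) (fst q)))"

text \<open>(x^a sigma^s)(x^b sigma^t) = x^a sigma^s(x^b) sigma^{s+t}\<close>
definition sk_mult :: "nat \<Rightarrow> ('k::comm_ring_1) skel \<Rightarrow> 'k skel \<Rightarrow> 'k skel" where
  "sk_mult n f g = (\<lambda>m. \<Sum>pq\<in>{p. f p \<noteq> 0} \<times> {q. g q \<noteq> 0}.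
      if key_mult n (fst pq) (snd pq) = m
      then coef_mult n (fst pq) (snd pq) * f (fst pq) * g (snd pq) else 0)"

definition sk_add :: "('k::comm_ring_1) skel \<Rightarrow> 'k skel \<Rightarrow> 'k skel" where
  "sk_add f g = (\<lambda>m. f m + g m)"

definition sk_basis :: "skey \<Rightarrow> ('k::comm_ring_1) skel" where
  "sk_basis p = (\<lambda>m. if m = p then 1 else 0)"

definition sk_one :: "nat \<Rightarrow> ('k::comm_ring_1) skel" where
  "sk_one n = sk_basis (replicate n 0, 0)"

definition sk_pow :: "nat \<Rightarrow> ('k::comm_ring_1) skel \<Rightarrow> nat \<Rightarrow> 'k skel" where
  "sk_pow n f N = (sk_mult n f ^^ N) (sk_one n)"

definition sk_x :: "nat \<Rightarrow> nat \<Rightarrow> ('k::comm_ring_1) skel" where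
  "sk_x n i = sk_basis ((replicate n 0)[i mod n := 1], 0)"

definition sk_sigma :: "nat \<Rightarrow> nat \<Rightarrow> ('k::comm_ring_1) skel" where
  "sk_sigma n s = sk_basis (replicate n 0, s mod n)"

definition sk_b :: "nat \<Rightarrow> 'k::field \<Rightarrow> nat \<Rightarrow> 'k skel" where
  "sk_b n \<omega> \<gamma> = (\<lambda>m. (\<Sum>i<n. \<omega> ^ (i * \<gamma>) * sk_x n i m) / of_nat n)"

definition sk_e :: "nat \<Rightarrow> 'k::field \<Rightarrow> nat \<Rightarrow> 'k skel" where
  "sk_e n \<omega> \<alpha> = (\<lambda>m. (\<Sum>i<n. (\<omega> ^ \<alpha>) ^ i * sk_sigma n i m) / of_nat n)"

text \<open>c_j = b_k b_{j-k} + b_{j-k} b_k, independent of k; we use k = 0.\<close>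
definition sk_c :: "nat \<Rightarrow> 'k::field \<Rightarrow> nat \<Rightarrow> 'k skel" where
  "sk_c n \<omega> j = sk_add (sk_mult n (sk_b n \<omega> 0) (sk_b n \<omega> j))
                        (sk_mult n (sk_b n \<omega> j) (sk_b n \<omega> 0))"

inductive_set sk_ideal :: "nat \<Rightarrow> ('k::comm_ring_1) skel \<Rightarrow> 'k skel set"
  for n :: nat and g :: "'k skel" where
  gen: "g \<in> sk_ideal n g"
| zero: "(\<lambda>_. 0) \<in> sk_ideal n g"
| add: "x \<in> sk_ideal n g \<Longrightarrow> y \<in> sk_ideal n g \<Longrightarrow> sk_add x y \<in> sk_ideal n g"
| left: "r \<in> sk_carrier n \<Longrightarrow> x \<in> sk_ideal n g \<Longrightarrow> sk_mult n r x \<in> sk_ideal n g"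
| right: "r \<in> sk_carrier n \<Longrightarrow> x \<in> sk_ideal n g \<Longrightarrow> sk_mult n x r \<in> sk_ideal n g"

end

theory Submission
  imports Defs
begin

text \<open>For \<open>F\<close> a combination of monomials with even exponents and no group part,
  write \<open>F e\<^sub>\<alpha>\<close> for \<open>F\<close> times the idempotent \<open>e\<^sub>\<alpha>\<close>, so that \<open>F = \<Sum>\<^sub>\<alpha> F e\<^sub>\<alpha>\<close>.
  With \<open>c\<^sub>k = (2/n\<^sup>2) \<Sum>\<^sub>i \<omega>\<^sup>i\<^sup>k x\<^sub>i\<^sup>2\<close> one computes
  \<open>c\<^sub>k (F e\<^sub>\<alpha>) = (c\<^sub>k F) e\<^sub>\<alpha>\<close>, \<open>(F e\<^sub>\<alpha>\<^sub>+\<^sub>k) c\<^sub>k = (c\<^sub>k F) e\<^sub>\<alpha>\<close> and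
  \<open>b\<^sub>d (F e\<^sub>\<alpha>\<^sub>+\<^sub>d\<^sub>') b\<^sub>d\<^sub>' + b\<^sub>d\<^sub>' (F e\<^sub>\<alpha>\<^sub>+\<^sub>d) b\<^sub>d = (c\<^sub>d\<^sub>+\<^sub>d\<^sub>' F) e\<^sub>\<alpha>\<close>.
  Hence the residues \<open>\<alpha>\<close> with \<open>c\<^sub>k\<^sup>N e\<^sub>\<alpha> \<in> (e\<^sub>0)\<close> for all large \<open>N\<close> contain 0, are
  closed under \<open>\<alpha> + k \<mapsto> \<alpha>\<close> and under \<open>(\<alpha> + d, \<alpha> + d') \<mapsto> \<alpha>\<close> when \<open>d + d' \<equiv> k\<close>.
  Such a set contains all multiples of \<open>k\<close> and is closed under halving, so it is all of
  \<open>\<int>/n\<close> when \<open>gcd(k, n)\<close> is a power of 2; summing over \<open>\<alpha>\<close> then puts \<open>c\<^sub>k\<^sup>N\<close> in \<open>(e\<^sub>0)\<close>.\<close>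

section \<open>Residues modulo \<open>n\<close>\<close>

lemma power_mod_eq_power:
  fixes x :: "'a::monoid_mult"
  assumes "x ^ n = 1"
  shows "x ^ (a mod n) = x ^ a"
proof -
  have "x ^ a = (x ^ n) ^ (a div n) * x ^ (a mod n)"
    by (simp add: power_mult[symmetric] power_add[symmetric])
  then show ?thesis by (simp add: assms)
qed

lemma power_pow_eq_1:
  fixes x :: "'a::comm_monoid_mult"
  assumes "x ^ n = 1"
  shows "(x ^ a) ^ n = 1"
  by (metis assms mult.commute power_mult power_one)

lemma sub_mod_eq_iff:
  assumes "v < (n::nat)" "s < n" "j < n"
  shows "(v + n - s) mod n = j \<longleftrightarrow> v = (j + s) mod n"
proof -
  have A: "(v + n - s) mod n = (if s \<le> v then v - s else v + n - s)"
  proof (cases "s \<le> v")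
    case True
    then have "v + n - s = (v - s) + n" by simp
    then have "(v + n - s) mod n = (v - s) mod n" by (simp only: mod_add_self2)
    also have "\<dots> = v - s" using assms by simp
    finally show ?thesis using True by simp
  next
    case False
    then show ?thesis using assms by simp
  qed
  have B: "(j + s) mod n = (if j + s < n then j + s else j + s - n)"
  proof (cases "j + s < n")
    case True then show ?thesis by simp
  next
    case False
    then have "(j + s) mod n = (j + s - n) mod n" by (simp add: le_mod_geq)
    also have "\<dots> = j + s - n" using assms by simp
    finally show ?thesis using False by simp
  qed
  show ?thesis unfolding A B by (split if_split, split if_split) (use assms in arith)
qed

lemma sub_add_mod_cancel: "i < (n::nat) \<Longrightarrow> s < n \<Longrightarrow> ((i + n - s) mod n + s) mod n = i"
proof -
  assume a: "i < n" "s < n"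
  then have "n > 0" by simp
  then have "(i + n - s) mod n < n" by simp
  then show ?thesis using sub_mod_eq_iff[of i n s "(i + n - s) mod n"] a by simp
qed

lemma add_sub_mod_cancel: "l < (n::nat) \<Longrightarrow> s < n \<Longrightarrow> ((l + s) mod n + n - s) mod n = l"
proof -
  assume a: "l < n" "s < n"
  then have "n > 0" by simp
  then have "(l + s) mod n < n" by simp
  then show ?thesis using sub_mod_eq_iff[of "(l + s) mod n" n s l] a by simp
qed

lemma gcd_mult_mod_eq_mult_mod:
  fixes k n a :: nat
  shows "\<exists>j. (j * k) mod n = (gcd k n * a) mod n"
proof (cases "k = 0")
  case True
  then show ?thesis by (intro exI[of _ 0]) simp
next
  case False
  then obtain x y where "k * x = n * y + gcd k n" using bezout_nat by blast
  then have "(x * a) * k = gcd k n * a + n * (y * a)" by (simp add: algebra_simps)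
  then show ?thesis by (intro exI[of _ "x * a"]) simp
qed

lemma residue_closure_all:
  fixes T :: "nat \<Rightarrow> bool" and n k m :: nat
  assumes "n > 0" and gcd: "gcd k n = 2 ^ m"
    and periodic: "\<And>\<alpha> \<beta>. \<alpha> mod n = \<beta> mod n \<Longrightarrow> T \<alpha> \<Longrightarrow> T \<beta>"
    and "T 0"
    and drop_k: "\<And>\<alpha>. T (\<alpha> + k) \<Longrightarrow> T \<alpha>"
    and combine: "\<And>\<alpha> d d'. T (\<alpha> + d) \<Longrightarrow> T (\<alpha> + d') \<Longrightarrow> (d + d') mod n = k mod n \<Longrightarrow> T \<alpha>"
  shows "T \<alpha>"
proof -
  have drop_multiple: "T \<alpha>" if "T (\<alpha> + j * k)" for j \<alpha>
    using that
  proof (induction j arbitrary: \<alpha>)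
    case (Suc j)
    have "T (\<alpha> + k + j * k)" using Suc.prems by (simp add: add.assoc)
    then show ?case by (rule drop_k[OF Suc.IH])
  qed simp
  have add_k: "T (\<alpha> + k)" if "T \<alpha>" for \<alpha>
  proof -
    have "\<alpha> + k + (n - 1) * k = \<alpha> + n * k"
      using \<open>n > 0\<close> by (cases n) auto
    then have "(\<alpha> + k + (n - 1) * k) mod n = \<alpha> mod n" by (simp only:) simp
    then have "T (\<alpha> + k + (n - 1) * k)" using periodic that by metis
    then show ?thesis by (rule drop_multiple)
  qed
  have multiple: "T (j * k)" for j
  proof (induction j)
    case (Suc j)
    then show ?case using add_k[of "j * k"] by (simp add: add.commute)
  qed (simp add: \<open>T 0\<close>)
  have halve: "T \<alpha>" if "T (2 * \<alpha>)" for \<alpha>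
  proof (rule combine)
    \<comment> \<open>take \<open>d = \<alpha> + k\<close> and \<open>d' \<equiv> -\<alpha>\<close>\<close>
    show "T (\<alpha> + (\<alpha> + k))" using add_k[OF that] by (simp add: mult_2 add.assoc)
    have "(\<alpha> + (n - \<alpha> mod n)) mod n = 0 mod n"
    proof -
      have "\<alpha> mod n < n" using \<open>n > 0\<close> by simp
      then have "\<alpha> + (n - \<alpha> mod n) = n * (\<alpha> div n) + n"
        using mult_div_mod_eq[of n \<alpha>] by linarith
      then show ?thesis by simp
    qed
    then show "T (\<alpha> + (n - \<alpha> mod n))" using periodic[OF _ \<open>T 0\<close>] by simp
    have "(\<alpha> + k + (n - \<alpha> mod n)) mod n = (k + (\<alpha> + (n - \<alpha> mod n))) mod n"
      by (simp add: add_ac)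
    also have "\<dots> = (k + 0) mod n"
      using \<open>(\<alpha> + (n - \<alpha> mod n)) mod n = 0 mod n\<close> by (metis mod_add_right_eq)
    finally show "(\<alpha> + k + (n - \<alpha> mod n)) mod n = k mod n" by simp
  qed
  have "T \<alpha>" if "T (2 ^ i * \<alpha>)" for i \<alpha>
    using that
  proof (induction i arbitrary: \<alpha>)
    case (Suc i)
    have "T (2 ^ i * (2 * \<alpha>))" using Suc.prems by (simp add: ac_simps)
    then show ?case by (rule halve[OF Suc.IH])
  qed simp
  moreover obtain j where "(j * k) mod n = (2 ^ m * \<alpha>) mod n"
    using gcd_mult_mod_eq_mult_mod[of k n \<alpha>] gcd by auto
  ultimately show ?thesis using periodic[OF _ multiple[of j]] by auto
qed

section \<open>Finite combinations of basis elements\<close>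

definition sk_comb :: "'i set \<Rightarrow> ('i \<Rightarrow> 'k::comm_ring_1) \<Rightarrow> ('i \<Rightarrow> skey) \<Rightarrow> 'k skel" where
  "sk_comb I w K = (\<lambda>m. \<Sum>i\<in>I. if K i = m then w i else 0)"

lemma sk_comb_support: "{p. sk_comb I w K p \<noteq> 0} \<subseteq> K ` I"
proof (rule subsetI, rule ccontr)
  fix p assume a: "p \<in> {p. sk_comb I w K p \<noteq> 0}" "p \<notin> K ` I"
  then have "(\<Sum>i\<in>I. if K i = p then w i else 0) = 0" by (intro sum.neutral) auto
  with a show False by (simp add: sk_comb_def)
qed

lemma sk_comb_carrier:
  assumes "finite I" "\<And>i. i \<in> I \<Longrightarrow> valid_key n (K i)"
  shows "sk_comb I w K \<in> sk_carrier n"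
  unfolding sk_carrier_def
proof (intro CollectI conjI allI impI)
  show "finite {p. sk_comb I w K p \<noteq> 0}"
    using sk_comb_support[of I w K] assms(1) by (meson finite_imageI finite_subset)
next
  fix p assume "sk_comb I w K p \<noteq> 0"
  then obtain i where "i \<in> I" "p = K i" using sk_comb_support[of I w K] by blast
  then show "valid_key n p" using assms(2) by simp
qed

lemma sk_comb_self: "finite S \<Longrightarrow> {p. F p \<noteq> 0} \<subseteq> S \<Longrightarrow> sk_comb S F (\<lambda>p. p) = F"
  unfolding sk_comb_def by (rule ext) (auto simp: sum.delta')

lemma sk_comb_cong:
  "(\<And>x. x \<in> X \<Longrightarrow> w x = w' x) \<Longrightarrow> (\<And>x. x \<in> X \<Longrightarrow> K x = K' x) \<Longrightarrow>
    sk_comb X w K = sk_comb X w' K'"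
  unfolding sk_comb_def by (rule ext, rule sum.cong) auto

lemma sk_comb_reindex:
  assumes "bij_betw h I J" "\<And>i. i \<in> I \<Longrightarrow> w' (h i) = w i" "\<And>i. i \<in> I \<Longrightarrow> K' (h i) = K i"
  shows "sk_comb I w K = sk_comb J w' K'"
proof (rule ext)
  fix m
  have "sk_comb J w' K' m = (\<Sum>i\<in>I. if K' (h i) = m then w' (h i) else 0)"
    unfolding sk_comb_def by (rule sum.reindex_bij_betw[symmetric]) (rule assms(1))
  also have "\<dots> = sk_comb I w K m" unfolding sk_comb_def by (rule sum.cong) (auto simp: assms)
  finally show "sk_comb I w K m = sk_comb J w' K' m" by simp
qed

lemma sk_comb_restrict:
  assumes "finite X" "D \<subseteq> X" "\<And>x. x \<in> X \<Longrightarrow> x \<notin> D \<Longrightarrow> w x = 0"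
  shows "sk_comb X w K = sk_comb D w K"
  unfolding sk_comb_def by (rule ext, rule sum.mono_neutral_right) (use assms in auto)

lemma sk_add_sk_comb:
  "sk_add (sk_comb X w1 K) (sk_comb X w2 K) = sk_comb X (\<lambda>x. w1 x + w2 x) K"
  unfolding sk_add_def sk_comb_def
  by (rule ext) (auto simp: sum.distrib[symmetric] intro!: sum.cong)

lemma sk_mult_eq_sum:
  assumes "finite A" "finite B" "{p. f p \<noteq> 0} \<subseteq> A" "{q. g q \<noteq> 0} \<subseteq> B"
  shows "sk_mult n f g m = (\<Sum>pq\<in>A\<times>B. if key_mult n (fst pq) (snd pq) = m
      then coef_mult n (fst pq) (snd pq) * f (fst pq) * g (snd pq) else 0)"
  unfolding sk_mult_def
  by (rule sum.mono_neutral_left) (use assms in \<open>auto intro: finite_subset\<close>)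

lemma sk_mult_sk_comb:
  assumes "finite I" "finite J"
  shows "sk_mult n (sk_comb I w K) (sk_comb J v L) = sk_comb (I \<times> J)
     (\<lambda>(i,j). coef_mult n (K i) (L j) * w i * v j) (\<lambda>(i,j). key_mult n (K i) (L j))"
    (is "sk_mult n ?f ?g = sk_comb _ ?w ?k")
proof (rule ext)
  fix m
  let ?A = "K ` I \<times> L ` J"
  let ?t = "\<lambda>i j pq. if pq = (K i, L j) \<and> key_mult n (K i) (L j) = m
    then coef_mult n (K i) (L j) * w i * v j else 0"
  have "sk_mult n ?f ?g m = (\<Sum>pq\<in>?A. if key_mult n (fst pq) (snd pq) = m
      then coef_mult n (fst pq) (snd pq) * ?f (fst pq) * ?g (snd pq) else 0)"
    using assms sk_comb_support[of I w K] sk_comb_support[of J v L]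
    by (intro sk_mult_eq_sum) auto
  also have "\<dots> = (\<Sum>pq\<in>?A. \<Sum>i\<in>I. \<Sum>j\<in>J. ?t i j pq)"
  proof (rule sum.cong[OF refl])
    fix pq :: "skey \<times> skey"
    obtain p q where pq: "pq = (p,q)" by (metis surj_pair)
    have "(if key_mult n p q = m then coef_mult n p q * ?f p * ?g q else 0)
        = (\<Sum>i\<in>I. \<Sum>j\<in>J. if key_mult n p q = m
            then coef_mult n p q * (if K i = p then w i else 0) * (if L j = q then v j else 0)
            else 0)"
      by (simp add: sk_comb_def sum_distrib_left sum_distrib_right)
         (intro impI, subst sum.swap, rule refl)
    also have "\<dots> = (\<Sum>i\<in>I. \<Sum>j\<in>J. ?t i j pq)"
      by (intro sum.cong) (auto simp: pq)
    finally show "(if key_mult n (fst pq) (snd pq) = m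
        then coef_mult n (fst pq) (snd pq) * ?f (fst pq) * ?g (snd pq) else 0)
      = (\<Sum>i\<in>I. \<Sum>j\<in>J. ?t i j pq)" by (simp only: pq prod.sel)
  qed
  also have "\<dots> = (\<Sum>i\<in>I. \<Sum>j\<in>J. \<Sum>pq\<in>?A. ?t i j pq)"
    by (subst sum.swap, rule sum.cong[OF refl], rule sum.swap)
  also have "\<dots> = (\<Sum>i\<in>I. \<Sum>j\<in>J. if key_mult n (K i) (L j) = m
      then coef_mult n (K i) (L j) * w i * v j else 0)"
    using assms by (intro sum.cong) (auto simp: if_distrib[symmetric] sum.delta' conj_commute)
  also have "\<dots> = sk_comb (I \<times> J) ?w ?k m"
    by (simp add: sk_comb_def sum.cartesian_product split_def)
  finally show "sk_mult n ?f ?g m = sk_comb (I \<times> J) ?w ?k m" .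
qed

lemma sk_mult_sk_comb_reindex:
  assumes "finite I" "finite J" and h: "bij_betw h (I \<times> J) X"
    and weight: "\<And>i j. i \<in> I \<Longrightarrow> j \<in> J \<Longrightarrow> W (h (i, j)) = coef_mult n (K i) (L j) * w i * v j"
    and key: "\<And>i j. i \<in> I \<Longrightarrow> j \<in> J \<Longrightarrow> K' (h (i, j)) = key_mult n (K i) (L j)"
  shows "sk_mult n (sk_comb I w K) (sk_comb J v L) = sk_comb X W K'"
  unfolding sk_mult_sk_comb[OF assms(1,2)] by (rule sk_comb_reindex[OF h]) (auto simp: weight key)

section \<open>Exponent vectors and reordering signs\<close>

definition single_exp :: "nat \<Rightarrow> nat \<Rightarrow> nat \<Rightarrow> nat list" where
  "single_exp n c i = map (\<lambda>v. if v = i then c else 0) [0..<n]"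

lemma length_single_exp[simp]: "length (single_exp n c i) = n"
  by (simp add: single_exp_def)

lemma nth_single_exp[simp]: "v < n \<Longrightarrow> single_exp n c i ! v = (if v = i then c else 0)"
  by (simp add: single_exp_def)

lemma replicate_update_eq_single_exp: "i < n \<Longrightarrow> (replicate n 0)[i := Suc 0] = single_exp n (Suc 0) i"
  by (rule nth_equalityI) (auto simp: nth_list_update)

lemma length_shift_exp[simp]: "length (shift_exp n s b) = n"
  by (simp add: shift_exp_def)

lemma nth_shift_exp[simp]: "v < n \<Longrightarrow> shift_exp n s b ! v = b ! ((v + n - s) mod n)"
  by (simp add: shift_exp_def)

lemma shift_exp_0: "length b = n \<Longrightarrow> shift_exp n 0 b = b"
  by (rule nth_equalityI) auto

lemma snd_key_mult[simp]: "snd (key_mult n p q) = (snd p + snd q) mod n"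
  by (simp add: key_mult_def)

lemma length_key_mult[simp]: "length (fst p) = n \<Longrightarrow> length (fst (key_mult n p q)) = n"
  by (simp add: key_mult_def)

lemma nth_key_mult[simp]: "length (fst p) = n \<Longrightarrow> v < n \<Longrightarrow>
   fst (key_mult n p q) ! v = fst p ! v + fst q ! ((v + n - snd p) mod n)"
  by (simp add: key_mult_def)

lemma key_mult_square_rotate:
  assumes "length a = n" "s < n" "j < n"
  shows "key_mult n (a, s) (single_exp n 2 j, 0)
       = (fst (key_mult n (single_exp n 2 ((j + s) mod n), 0) (a, 0)), s)"
proof (rule prod_eqI)
  show "fst (key_mult n (a, s) (single_exp n 2 j, 0))
      = fst (fst (key_mult n (single_exp n 2 ((j + s) mod n), 0) (a, 0)), s)"
  proof (rule nth_equalityI)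
    fix v assume "v < length (fst (key_mult n (a, s) (single_exp n 2 j, 0)))"
    then have "v < n" "(v + n - s) mod n < n" using assms by auto
    then show "fst (key_mult n (a, s) (single_exp n 2 j, 0)) ! v
        = fst (fst (key_mult n (single_exp n 2 ((j + s) mod n), 0) (a, 0)), s) ! v"
      using assms by (simp add: sub_mod_eq_iff)
  qed (use assms in simp)
qed (use assms in simp)

lemma key_mult_sandwich:
  assumes "length a = n" "i < n" "s < n" "l < n"
  shows "key_mult n (single_exp n (Suc 0) i, 0) (key_mult n (a,s) (single_exp n (Suc 0) l, 0)) =
    (map (\<lambda>v. (if v = i then 1 else 0) + a ! v + (if v = (l + s) mod n then 1 else 0)) [0..<n], s)"
    (is "?lhs = (?rhs, s)")
proof (rule prod_eqI)
  show "fst ?lhs = fst (?rhs, s)"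
  proof (rule nth_equalityI)
    fix v assume "v < length (fst ?lhs)"
    then have "v < n" "(v + n - s) mod n < n" using assms by auto
    then show "fst ?lhs ! v = fst (?rhs, s) ! v" using assms by (simp add: sub_mod_eq_iff)
  qed (use assms in simp)
qed (use assms in simp)

lemma sign_sigma_0: "sign_sigma n 0 b = 0"
  unfolding sign_sigma_def by (intro sum.neutral) auto

lemma sign_sigma_eq_0:
  "(\<And>i j. i < n \<Longrightarrow> j < n \<Longrightarrow> i \<noteq> j \<Longrightarrow> b ! i * b ! j = 0) \<Longrightarrow> sign_sigma n s b = 0"
  unfolding sign_sigma_def by (intro sum.neutral) auto

lemma even_sign_mono: "(\<And>u. u < n \<Longrightarrow> even (a ! u)) \<Longrightarrow> even (sign_mono n a b)"
  unfolding sign_mono_def by (intro dvd_sum) auto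

lemma sign_mono_single_exp: "i < n \<Longrightarrow> sign_mono n (single_exp n (Suc 0) i) b = (\<Sum>v<i. b ! v)"
proof -
  assume i: "i < n"
  have "sign_mono n (single_exp n (Suc 0) i) b = (\<Sum>u<n. if u = i then (\<Sum>v<i. b ! v) else 0)"
    unfolding sign_mono_def
    by (rule sum.cong[OF refl]) (simp add: sum_distrib_left[symmetric])
  also have "\<dots> = (\<Sum>v<i. b ! v)" using i by simp
  finally show ?thesis .
qed

lemma coef_mult_square_left: "length (fst q) = n \<Longrightarrow> coef_mult n (single_exp n 2 i, 0) q = 1"
proof -
  assume "length (fst q) = n"
  have "even (sign_mono n (single_exp n 2 i) (shift_exp n 0 (fst q)))" by (rule even_sign_mono) simp
  then show ?thesis by (simp add: coef_mult_def sign_sigma_0)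
qed

lemma coef_mult_even_single:
  assumes "\<And>u. u < n \<Longrightarrow> even (fst p ! u)"
  shows "coef_mult n p (single_exp n c l, 0) = 1"
proof -
  have "sign_sigma n (snd p) (single_exp n c l) = 0" by (rule sign_sigma_eq_0) auto
  moreover have "even (sign_mono n (fst p) (shift_exp n (snd p) (single_exp n c l)))"
    by (rule even_sign_mono) (rule assms)
  ultimately show ?thesis by (simp add: coef_mult_def)
qed

lemma coef_mult_single_left:
  "i < n \<Longrightarrow> length (fst q) = n \<Longrightarrow>
    coef_mult n (single_exp n (Suc 0) i, 0) q = (-1) ^ (\<Sum>v<i. fst q ! v)"
  using sign_mono_single_exp[of i n "fst q"] by (simp add: coef_mult_def sign_sigma_0 shift_exp_0)

lemma coef_mult_single_single:
  assumes "i < n" "j < n"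
  shows "coef_mult n (single_exp n (Suc 0) i, 0) (single_exp n (Suc 0) j, 0)
       = (if j < i then -1 else 1)"
proof -
  have "(\<Sum>v<i. single_exp n (Suc 0) j ! v) = (\<Sum>v<i. if v = j then 1 else 0)"
    using assms by (intro sum.cong) auto
  then show ?thesis using assms by (simp add: coef_mult_single_left)
qed

lemma coef_mult_single_sandwich:
  assumes "length a = n" "\<forall>v<n. even (a ! v)" "i < n" "s < n" "l < n"
  shows "coef_mult n (single_exp n (Suc 0) i, 0) (key_mult n (a,s) (single_exp n (Suc 0) l, 0))
       = (if (l + s) mod n < i then -1 else 1)"
proof -
  let ?b = "fst (key_mult n (a,s) (single_exp n (Suc 0) l, 0))"
  have "?b ! v = a ! v + (if v = (l + s) mod n then 1 else 0)" if "v < i" for v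
  proof -
    have "v < n" "(v + n - s) mod n < n" using assms that by auto
    then show ?thesis using assms by (simp add: sub_mod_eq_iff)
  qed
  then have "(\<Sum>v<i. ?b ! v) = (\<Sum>v<i. a ! v + (if v = (l + s) mod n then 1 else 0))"
    by (intro sum.cong) auto
  also have "\<dots> = (\<Sum>v<i. a ! v) + (if (l + s) mod n < i then 1 else 0)"
    by (simp add: sum.distrib)
  finally have "(\<Sum>v<i. ?b ! v) = (\<Sum>v<i. a ! v) + (if (l + s) mod n < i then 1 else 0)" .
  moreover have "even (\<Sum>v<i. a ! v)" using assms by (intro dvd_sum) auto
  ultimately show ?thesis using assms by (simp add: coef_mult_single_left power_add)
qed

section \<open>The elements \<open>b\<^sub>\<gamma>\<close>, \<open>c\<^sub>k\<close> and \<open>F e\<^sub>\<alpha>\<close>\<close>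

definition sk_xsum :: "nat \<Rightarrow> 'k::field \<Rightarrow> 'k skel" where
  "sk_xsum n \<mu> = sk_comb {..<n} (\<lambda>i. \<mu> ^ i / of_nat n) (\<lambda>i. (single_exp n (Suc 0) i, 0))"

definition sk_sqsum :: "nat \<Rightarrow> 'k::field \<Rightarrow> 'k skel" where
  "sk_sqsum n \<kappa> = sk_comb {..<n} (\<lambda>i. 2 * \<kappa> ^ i / (of_nat n)^2) (\<lambda>i. (single_exp n 2 i, 0))"

text \<open>For \<open>F\<close> with trivial group part, \<open>times_e n F (\<omega> ^ \<alpha>)\<close> is the product \<open>F e\<^sub>\<alpha>\<close>;
  only the values of \<open>F\<close> on keys \<open>(a, 0)\<close> are read.\<close>
definition times_e :: "nat \<Rightarrow> 'k::field skel \<Rightarrow> 'k \<Rightarrow> 'k skel" where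
  "times_e n F \<rho> = (\<lambda>(a,s). if s < n then F (a,0) * \<rho> ^ s / of_nat n else 0)"

text \<open>Monomials with even exponents commute with every \<open>x\<^sub>i\<close>, so all reordering signs
  against them vanish.\<close>
definition sk_even :: "nat \<Rightarrow> 'k::zero skel \<Rightarrow> bool" where
  "sk_even n F \<longleftrightarrow> finite {p. F p \<noteq> 0} \<and>
     (\<forall>p. F p \<noteq> 0 \<longrightarrow> snd p = 0 \<and> length (fst p) = n \<and> (\<forall>v<n. even (fst p ! v)))"

lemma sk_even_keyD:
  "sk_even n F \<Longrightarrow> F p \<noteq> 0 \<Longrightarrow> snd p = 0 \<and> length (fst p) = n \<and> (\<forall>v<n. even (fst p ! v))"
  by (cases p) (simp add: sk_even_def)

lemma sk_evenD: "sk_even n F \<Longrightarrow> F (a,s) \<noteq> 0 \<Longrightarrow> s = 0 \<and> length a = n \<and> (\<forall>v<n. even (a ! v))"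
  by (simp add: sk_even_def)

lemma sk_even_finite: "sk_even n F \<Longrightarrow> finite {p. F p \<noteq> 0}"
  by (simp add: sk_even_def)

lemma sk_even_sk_comb:
  assumes "finite I"
    and "\<And>i. i \<in> I \<Longrightarrow> snd (K i) = 0 \<and> length (fst (K i)) = n \<and> (\<forall>v<n. even (fst (K i) ! v))"
  shows "sk_even n (sk_comb I w K)"
  unfolding sk_even_def
proof
  show "finite {p. sk_comb I w K p \<noteq> 0}"
    using sk_comb_support[of I w K] assms(1) by (meson finite_imageI finite_subset)
next
  show "\<forall>p. sk_comb I w K p \<noteq> 0 \<longrightarrow> snd p = 0 \<and> length (fst p) = n \<and> (\<forall>v<n. even (fst p ! v))"
  proof (intro allI impI)
    fix p assume "sk_comb I w K p \<noteq> 0"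
    then obtain i where "i \<in> I" "p = K i" using sk_comb_support[of I w K] by blast
    then show "snd p = 0 \<and> length (fst p) = n \<and> (\<forall>v<n. even (fst p ! v))"
      using assms(2) by simp
  qed
qed

lemma sk_even_sk_comb_self: "sk_even n F \<Longrightarrow> sk_comb {p. F p \<noteq> 0} F (\<lambda>p. p) = F"
  by (rule sk_comb_self) (auto simp: sk_even_def)

lemma sk_even_one: "sk_even n (sk_one n :: 'k::field skel)"
proof -
  have "{p. (sk_one n :: 'k skel) p \<noteq> 0} = {(replicate n 0, 0)}"
    by (auto simp: sk_one_def sk_basis_def)
  then show ?thesis unfolding sk_even_def by (auto simp: sk_one_def sk_basis_def)
qed

lemma times_e_sk_comb:
  assumes "finite I" "\<And>i. i \<in> I \<Longrightarrow> snd (K i) = 0"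
  shows "times_e n (sk_comb I w K) \<rho>
       = sk_comb (I \<times> {..<n}) (\<lambda>(i,s). w i * \<rho> ^ s / of_nat n) (\<lambda>(i,s). (fst (K i), s))"
    (is "_ = ?rhs")
proof (rule ext)
  fix m :: skey
  obtain a s where m: "m = (a,s)" by (metis surj_pair)
  have "?rhs m
     = (\<Sum>i\<in>I. \<Sum>s'\<in>{..<n}. if (fst (K i), s') = (a,s) then w i * \<rho> ^ s' / of_nat n else 0)"
    unfolding sk_comb_def m sum.cartesian_product by (rule sum.cong) (auto split: prod.splits)
  also have "\<dots> = (\<Sum>i\<in>I. if s < n then (if K i = (a,0) then w i else 0) * \<rho> ^ s / of_nat n else 0)"
  proof (rule sum.cong[OF refl])
    fix i assume "i \<in> I"
    then have Ki: "(K i = (a,0)) = (fst (K i) = a)" using assms(2) by (metis prod.collapse fst_conv)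
    show "(\<Sum>s'\<in>{..<n}. if (fst (K i), s') = (a,s) then w i * \<rho> ^ s' / of_nat n else 0)
       = (if s < n then (if K i = (a,0) then w i else 0) * \<rho> ^ s / of_nat n else 0)"
      by (simp add: Ki if_distrib[symmetric] sum.delta' conj_commute cong: if_cong)
  qed
  also have "\<dots> = times_e n (sk_comb I w K) \<rho> m"
    unfolding times_e_def sk_comb_def m by (simp add: sum_distrib_right sum_divide_distrib)
  finally show "times_e n (sk_comb I w K) \<rho> m = ?rhs m" by simp
qed

lemma times_e_eq_sk_comb:
  assumes "sk_even n F"
  shows "times_e n F \<rho>
       = sk_comb ({p. F p \<noteq> 0} \<times> {..<n}) (\<lambda>(p,s). F p * \<rho> ^ s / of_nat n) (\<lambda>(p,s). (fst p, s))"
proof -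
  have "times_e n F \<rho> = times_e n (sk_comb {p. F p \<noteq> 0} F (\<lambda>p. p)) \<rho>"
    using sk_even_sk_comb_self[OF assms] by simp
  also have "\<dots>
      = sk_comb ({p. F p \<noteq> 0} \<times> {..<n}) (\<lambda>(p,s). F p * \<rho> ^ s / of_nat n) (\<lambda>(p,s). (fst p, s))"
    by (rule times_e_sk_comb) (use assms in \<open>auto simp: sk_even_def\<close>)
  finally show ?thesis .
qed

lemma sk_xsum_carrier: "n > 0 \<Longrightarrow> sk_xsum n \<mu> \<in> sk_carrier n"
  unfolding sk_xsum_def by (rule sk_comb_carrier) (auto simp: valid_key_def)

lemma sk_sqsum_carrier: "n > 0 \<Longrightarrow> sk_sqsum n \<kappa> \<in> sk_carrier n"
  unfolding sk_sqsum_def by (rule sk_comb_carrier) (auto simp: valid_key_def)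

lemma sk_b_eq_xsum: "sk_b n \<omega> \<gamma> = sk_xsum n (\<omega> ^ \<gamma>)"
proof (rule ext)
  fix m
  have "sk_b n \<omega> \<gamma> m
      = (\<Sum>i<n. (if (single_exp n (Suc 0) i, 0) = m then (\<omega> ^ \<gamma>) ^ i else 0)) / of_nat n"
    unfolding sk_b_def
    by (rule arg_cong[where f="\<lambda>x. x / of_nat n"], rule sum.cong)
       (auto simp: sk_x_def sk_basis_def replicate_update_eq_single_exp power_mult[symmetric]
         mult.commute)
  then show "sk_b n \<omega> \<gamma> m = sk_xsum n (\<omega> ^ \<gamma>) m"
    by (simp add: sk_xsum_def sk_comb_def sum_divide_distrib) (rule sum.cong; simp)
qed

lemma xsum_anticommutator:
  fixes \<kappa> :: "'k::field"
  shows "sk_add (sk_mult n (sk_xsum n 1) (sk_xsum n \<kappa>)) (sk_mult n (sk_xsum n \<kappa>) (sk_xsum n 1))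
       = sk_sqsum n \<kappa>"
proof -
  let ?X = "{..<n} \<times> {..<n}"
  let ?K = "\<lambda>(i,j). key_mult n (single_exp n (Suc 0) i, 0) (single_exp n (Suc 0) j, 0)"
  let ?W = "\<lambda>(i,j). if i = j then 2 * \<kappa>^j / (of_nat n)^2 else 0"
  define sign where "sign = (\<lambda>i j :: nat. if j < i then - 1 else 1 :: 'k)"
  have first: "sk_mult n (sk_xsum n 1) (sk_xsum n \<kappa>)
      = sk_comb ?X (\<lambda>(i,j). sign i j * \<kappa>^j / (of_nat n)^2) ?K"
    unfolding sk_xsum_def
    by (rule sk_mult_sk_comb_reindex[OF _ _ bij_betw_id])
       (auto simp: sign_def coef_mult_single_single power2_eq_square)
  have second: "sk_mult n (sk_xsum n \<kappa>) (sk_xsum n 1)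
      = sk_comb ?X (\<lambda>(i,j). sign j i * \<kappa>^j / (of_nat n)^2) ?K"
    unfolding sk_xsum_def
    by (rule sk_mult_sk_comb_reindex[where h = "\<lambda>(i,j). (j,i)"])
       (auto simp: sign_def coef_mult_single_single power2_eq_square bij_betw_def inj_on_def
         image_def prod_eq_iff intro!: nth_equalityI)
  have diagonal: "bij_betw (\<lambda>j. (j,j)) {..<n} {x \<in> ?X. fst x = snd x}"
    by (rule bij_betw_byWitness[where f' = fst]) auto
  have "sk_add (sk_mult n (sk_xsum n 1) (sk_xsum n \<kappa>)) (sk_mult n (sk_xsum n \<kappa>) (sk_xsum n 1))
      = sk_comb ?X ?W ?K"
    unfolding first second sk_add_sk_comb by (rule sk_comb_cong) (auto simp: sign_def)
  also have "\<dots> = sk_comb {x \<in> ?X. fst x = snd x} ?W ?K"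
    by (rule sk_comb_restrict) auto
  also have "\<dots> = sk_sqsum n \<kappa>"
    unfolding sk_sqsum_def
    by (rule sk_comb_reindex[OF diagonal, symmetric]) (auto simp: prod_eq_iff intro!: nth_equalityI)
  finally show ?thesis .
qed

lemma sk_c_eq_sqsum: "sk_c n \<omega> k = sk_sqsum n (\<omega> ^ k)"
  unfolding sk_c_def sk_b_eq_xsum using xsum_anticommutator by simp

lemma sk_e_0_eq_times_e: "sk_e n \<omega> 0 = times_e n (sk_one n) 1"
proof (rule ext)
  fix m :: skey
  obtain a s where m: "m = (a,s)" by (metis surj_pair)
  have "(\<Sum>i<n. (\<omega> ^ 0) ^ i * sk_sigma n i (a,s))
      = (\<Sum>i<n. if i = s then (if a = replicate n 0 then 1 else 0) else 0)"
    by (rule sum.cong) (auto simp: sk_sigma_def sk_basis_def)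
  also have "\<dots> = (if s < n then (if a = replicate n 0 then 1 else 0) else 0)"
    by (subst sum.delta) auto
  finally show "sk_e n \<omega> 0 m = times_e n (sk_one n) 1 m"
    unfolding sk_e_def m by (simp add: times_e_def sk_one_def sk_basis_def)
qed

section \<open>Multiplying by \<open>c\<^sub>k\<close> and \<open>b\<^sub>\<gamma>\<close>\<close>

lemma sqsum_mult_eq_sk_comb:
  assumes F_even: "sk_even n F"
  shows "sk_mult n (sk_sqsum n \<kappa>) F = sk_comb ({..<n} \<times> {p. F p \<noteq> 0})
     (\<lambda>(i,p). 2 * \<kappa>^i / (of_nat n)^2 * F p) (\<lambda>(i,p). key_mult n (single_exp n 2 i, 0) p)"
proof -
  have "sk_mult n (sk_sqsum n \<kappa>) F = sk_mult n (sk_sqsum n \<kappa>) (sk_comb {p. F p \<noteq> 0} F (\<lambda>p. p))"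
    using sk_even_sk_comb_self[OF F_even] by simp
  also have "\<dots> = sk_comb ({..<n} \<times> {p. F p \<noteq> 0})
     (\<lambda>(i,p). 2 * \<kappa>^i / (of_nat n)^2 * F p) (\<lambda>(i,p). key_mult n (single_exp n 2 i, 0) p)"
    unfolding sk_sqsum_def
  proof (rule sk_mult_sk_comb_reindex[OF _ sk_even_finite[OF F_even] bij_betw_id], goal_cases)
    case (2 i p)
    then show ?case by (auto simp: coef_mult_square_left dest: sk_even_keyD[OF F_even])
  qed auto
  finally show ?thesis .
qed

lemma sk_even_sqsum_mult: "sk_even n F \<Longrightarrow> sk_even n (sk_mult n (sk_sqsum n \<kappa>) F)"
  unfolding sqsum_mult_eq_sk_comb
  by (intro sk_even_sk_comb) (auto simp: sk_even_finite dest: sk_evenD)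

lemma times_e_sqsum_mult_eq_sk_comb:
  assumes F_even: "sk_even n F"
  shows "times_e n (sk_mult n (sk_sqsum n \<kappa>) F) \<rho>
       = sk_comb (({..<n} \<times> {p. F p \<noteq> 0}) \<times> {..<n})
     (\<lambda>((i,p),s). 2 * \<kappa>^i / (of_nat n)^2 * F p * \<rho>^s / of_nat n)
     (\<lambda>((i,p),s). (fst (key_mult n (single_exp n 2 i, 0) p), s))"
  unfolding sqsum_mult_eq_sk_comb[OF F_even] using F_even
  by (subst times_e_sk_comb) (auto simp: sk_even_finite dest: sk_evenD intro!: sk_comb_cong)

lemma sqsum_mult_times_e:
  assumes F_even: "sk_even n F"
  shows "sk_mult n (sk_sqsum n \<kappa>) (times_e n F \<rho>) = times_e n (sk_mult n (sk_sqsum n \<kappa>) F) \<rho>"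
  unfolding times_e_sqsum_mult_eq_sk_comb[OF F_even]
  unfolding sk_sqsum_def times_e_eq_sk_comb[OF F_even]
proof (rule sk_mult_sk_comb_reindex[where h = "\<lambda>(i,(p,s)). ((i,p),s)"], goal_cases)
  case 3
  show ?case by (auto simp: bij_betw_def inj_on_def image_def)
next
  case (4 i ps)
  then show ?case by (auto simp: coef_mult_square_left mult_ac dest: sk_evenD[OF F_even])
next
  case (5 i ps)
  then show ?case by (auto simp: key_mult_def dest: sk_even_keyD[OF F_even])
qed (simp_all add: sk_even_finite[OF F_even])

text \<open>Right multiplication by \<open>c\<^sub>k\<close> moves each \<open>x\<^sub>j\<^sup>2\<close> past \<open>\<sigma>\<^sup>s\<close>, turning it into
  \<open>x\<^sub>j\<^sub>+\<^sub>s\<^sup>2\<close>; the factor \<open>\<kappa>\<^sup>s\<close> absorbed into the idempotent pays for the shift.\<close>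
lemma times_e_mult_sqsum:
  assumes F_even: "sk_even n F" and \<kappa>: "\<kappa> ^ n = 1"
  shows "sk_mult n (times_e n F (\<rho> * \<kappa>)) (sk_sqsum n \<kappa>)
       = times_e n (sk_mult n (sk_sqsum n \<kappa>) F) \<rho>"
  unfolding times_e_sqsum_mult_eq_sk_comb[OF F_even]
  unfolding sk_sqsum_def times_e_eq_sk_comb[OF F_even]
proof (rule sk_mult_sk_comb_reindex[where h = "\<lambda>((p,s),j). (((j + s) mod n, p), s)"], goal_cases)
  case 3
  show ?case
    by (rule bij_betw_byWitness[where f' = "\<lambda>((i,p),s). ((p,s), (i + n - s) mod n)"])
       (auto simp: sub_add_mod_cancel add_sub_mod_cancel)
next
  case (4 ps j)
  then have "\<kappa> ^ ((j + snd ps) mod n) = \<kappa> ^ snd ps * \<kappa> ^ j"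
    by (simp add: power_mod_eq_power[OF \<kappa>] power_add)
  with 4 show ?case
    by (auto simp: coef_mult_even_single power_mult_distrib field_simps dest: sk_evenD[OF F_even])
next
  case (5 ps j)
  then show ?case by (auto simp: key_mult_square_rotate dest: sk_evenD[OF F_even])
qed (simp_all add: sk_even_finite[OF F_even])

text \<open>Expanding \<open>b\<^sub>\<mu> (F e) b\<^sub>\<nu>\<close> gives one term \<open>x\<^sub>i (x\<^sup>p \<sigma>\<^sup>s) x\<^sub>l\<close> for each index
  \<open>(i, ((p, s), l))\<close>; it equals \<open>\<plusminus>x\<^sub>i x\<^sup>p x\<^sub>l\<^sub>+\<^sub>s \<sigma>\<^sup>s\<close>, the sign coming from moving
  \<open>x\<^sub>l\<^sub>+\<^sub>s\<close> past \<open>x\<^sub>i\<close>.\<close>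
definition sandwich_weight ::
    "nat \<Rightarrow> 'k::field skel \<Rightarrow> 'k \<Rightarrow> 'k \<Rightarrow> 'k \<Rightarrow> nat \<times> (skey \<times> nat) \<times> nat \<Rightarrow> 'k" where
  "sandwich_weight n F \<mu> \<nu> \<rho> = (\<lambda>(i,((p,s),l)).
     (if (l + s) mod n < i then -1 else 1) * (\<mu>^i * F p * \<rho>^s * \<nu>^l) / (of_nat n)^3)"

definition sandwich_key :: "nat \<Rightarrow> nat \<times> (skey \<times> nat) \<times> nat \<Rightarrow> skey" where
  "sandwich_key n = (\<lambda>(i,((p,s),l)).
     (map (\<lambda>v. (if v = i then 1 else 0) + fst p ! v + (if v = (l + s) mod n then 1 else 0))
        [0..<n], s))"

lemma xsum_sandwich_eq_sk_comb:
  assumes F_even: "sk_even n F"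
  shows "sk_mult n (sk_xsum n \<mu>) (sk_mult n (times_e n F \<rho>) (sk_xsum n \<nu>)) =
    sk_comb ({..<n} \<times> (({p. F p \<noteq> 0} \<times> {..<n}) \<times> {..<n}))
      (sandwich_weight n F \<mu> \<nu> \<rho>) (sandwich_key n)"
proof -
  have fin: "finite {p. F p \<noteq> 0}" by (rule sk_even_finite[OF F_even])
  have inner: "sk_mult n (times_e n F \<rho>) (sk_xsum n \<nu>)
    = sk_comb (({p. F p \<noteq> 0} \<times> {..<n}) \<times> {..<n})
      (\<lambda>((p,s),l). F p * \<rho> ^ s / of_nat n * (\<nu> ^ l / of_nat n))
      (\<lambda>((p,s),l). key_mult n (fst p, s) (single_exp n (Suc 0) l, 0))"
    unfolding times_e_eq_sk_comb[OF F_even] sk_xsum_def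
  proof (rule sk_mult_sk_comb_reindex[OF _ _ bij_betw_id], goal_cases)
    case (3 ps l)
    then show ?case by (auto simp: coef_mult_even_single dest: sk_evenD[OF F_even])
  qed (auto simp: fin)
  show ?thesis
    unfolding inner unfolding sk_xsum_def
  proof (rule sk_mult_sk_comb_reindex[OF _ _ bij_betw_id], goal_cases)
    case (3 i x)
    then show ?case
      by (auto simp: sandwich_weight_def coef_mult_single_sandwich power3_eq_cube mult_ac
          dest: sk_evenD[OF F_even])
  next
    case (4 i x)
    then show ?case by (auto simp: sandwich_key_def key_mult_sandwich dest: sk_evenD[OF F_even])
  qed (auto simp: fin)
qed

definition sandwich_diag_weight ::
    "nat \<Rightarrow> 'k::field skel \<Rightarrow> 'k \<Rightarrow> 'k \<Rightarrow> nat \<times> (skey \<times> nat) \<times> nat \<Rightarrow> 'k" where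
  "sandwich_diag_weight n F \<kappa> \<rho> = (\<lambda>(i,((p,s),l)).
     if (l + s) mod n = i then 2 * \<kappa>^i * F p * \<rho>^s / (of_nat n)^3 else 0)"

text \<open>The term \<open>(i, s, l)\<close> of \<open>b\<^sub>\<mu> (F e) b\<^sub>\<nu>\<close> pairs with the term \<open>(t, s, l')\<close> of
  \<open>b\<^sub>\<nu> (F e) b\<^sub>\<mu>\<close> having the same monomial, where \<open>t = l + s\<close> and \<open>i = l' + s\<close>;
  the two signs are opposite unless \<open>t = i\<close>.\<close>
lemma sandwich_weight_pair:
  fixes \<mu> \<nu> :: "'k::field"
  assumes \<mu>: "\<mu> ^ n = 1" and \<nu>: "\<nu> ^ n = 1" and "i < n" "s < n"
  shows "sandwich_weight n F \<mu> \<nu> (\<rho> * \<nu>) (i,((p,s),l))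
       + sandwich_weight n F \<nu> \<mu> (\<rho> * \<mu>) ((l + s) mod n, ((p,s), (i + n - s) mod n))
       = sandwich_diag_weight n F (\<mu> * \<nu>) \<rho> (i,((p,s),l))"
proof -
  define t where "t = (l + s) mod n"
  define l' where "l' = (i + n - s) mod n"
  have tl': "(l' + s) mod n = i" using assms by (simp add: l'_def sub_add_mod_cancel)
  have \<nu>t: "\<nu>^s * \<nu>^l = \<nu>^t"
    unfolding t_def power_mod_eq_power[OF \<nu>] by (simp add: power_add[symmetric] add.commute)
  then have \<nu>t': "\<nu>^l * \<nu>^s = \<nu>^t" by (simp add: mult.commute)
  have \<mu>i: "\<mu>^l' * \<mu>^s = \<mu>^i"
    using tl' power_mod_eq_power[OF \<mu>, of "l' + s"] by (simp add: power_add)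
  then have \<mu>i': "\<mu>^s * \<mu>^l' = \<mu>^i" by (simp add: mult.commute)
  let ?Q = "\<mu>^i * \<nu>^t * \<rho>^s * F p / (of_nat n)^3"
  have first: "sandwich_weight n F \<mu> \<nu> (\<rho> * \<nu>) (i,((p,s),l)) = (if t < i then -1 else 1) * ?Q"
  proof -
    have "sandwich_weight n F \<mu> \<nu> (\<rho> * \<nu>) (i,((p,s),l))
        = (if t < i then -1 else 1) * (\<mu>^i * F p * (\<rho>^s * (\<nu>^s * \<nu>^l))) / (of_nat n)^3"
      by (simp add: sandwich_weight_def t_def power_mult_distrib mult_ac)
    then show ?thesis by (simp add: \<nu>t \<nu>t' mult_ac)
  qed
  have second: "sandwich_weight n F \<nu> \<mu> (\<rho> * \<mu>) (t, ((p,s), l')) = (if i < t then -1 else 1) * ?Q"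
  proof -
    have "sandwich_weight n F \<nu> \<mu> (\<rho> * \<mu>) (t, ((p,s), l'))
        = (if i < t then -1 else 1) * (\<nu>^t * F p * (\<rho>^s * (\<mu>^l' * \<mu>^s))) / (of_nat n)^3"
      by (simp add: sandwich_weight_def tl' power_mult_distrib mult_ac)
    then show ?thesis by (simp add: \<mu>i \<mu>i' mult_ac)
  qed
  show ?thesis
  proof (cases "t = i")
    case True
    then show ?thesis using first second
      by (simp add: sandwich_diag_weight_def t_def[symmetric] l'_def[symmetric]
          power_mult_distrib mult_ac)
  next
    case False
    then have "(if t < i then -1 else 1) + (if i < t then -1 else (1::'k)) = 0" by auto
    then have "(if t < i then -1 else 1) * ?Q + (if i < t then -1 else 1) * ?Q = 0"
      by (metis distrib_right mult_zero_left)
    then show ?thesis using not_sym[OF False] first second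
      by (simp add: sandwich_diag_weight_def t_def[symmetric] l'_def[symmetric])
  qed
qed

lemma times_e_sqsum_mult_eq_diagonal:
  assumes F_even: "sk_even n F"
  shows "times_e n (sk_mult n (sk_sqsum n \<kappa>) F) \<rho>
       = sk_comb ({..<n} \<times> (({p. F p \<noteq> 0} \<times> {..<n}) \<times> {..<n}))
           (sandwich_diag_weight n F \<kappa> \<rho>) (sandwich_key n)"
proof -
  let ?S = "{p. F p \<noteq> 0}"
  let ?X = "{..<n} \<times> ((?S \<times> {..<n}) \<times> {..<n})"
  define D where "D = {x \<in> ?X. (case x of (i,((p,s),l)) \<Rightarrow> (l + s) mod n = i)}"
  define g where "g = (\<lambda>((i::nat,p::skey),s::nat). (i, ((p,s), (i + n - s) mod n)))"
  have gD: "bij_betw g (({..<n} \<times> ?S) \<times> {..<n}) D"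
    by (rule bij_betw_byWitness[where f'="\<lambda>(i,((p,s),l)). ((i,p),s)"])
       (auto simp: g_def D_def sub_add_mod_cancel add_sub_mod_cancel)
  have "times_e n (sk_mult n (sk_sqsum n \<kappa>) F) \<rho> = sk_comb (({..<n} \<times> ?S) \<times> {..<n})
     (\<lambda>((i,p),s). 2 * \<kappa>^i / (of_nat n)^2 * F p * \<rho>^s / of_nat n)
     (\<lambda>((i,p),s). (fst (key_mult n (single_exp n 2 i, 0) p), s))"
    by (rule times_e_sqsum_mult_eq_sk_comb[OF F_even])
  also have "\<dots> = sk_comb D (sandwich_diag_weight n F \<kappa> \<rho>) (sandwich_key n)"
  proof (rule sk_comb_reindex[OF gD])
    fix y assume y: "y \<in> ({..<n} \<times> ?S) \<times> {..<n}"
    obtain i p s where y_eq: "y = ((i,p),s)" by (metis surj_pair)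
    have ips: "i < n" "s < n" "F p \<noteq> 0" using y y_eq by auto
    have i: "((i + n - s) mod n + s) mod n = i" using ips by (simp add: sub_add_mod_cancel)
    show "sandwich_diag_weight n F \<kappa> \<rho> (g y)
        = (\<lambda>((i,p),s). 2 * \<kappa>^i / (of_nat n)^2 * F p * \<rho>^s / of_nat n) y"
      by (simp add: sandwich_diag_weight_def g_def y_eq i power3_eq_cube power2_eq_square)
    have "length (fst p) = n" using sk_even_keyD[OF F_even ips(3)] by simp
    then show "sandwich_key n (g y) = (\<lambda>((i,p),s). (fst (key_mult n (single_exp n 2 i, 0) p), s)) y"
      using ips i by (auto simp: sandwich_key_def g_def y_eq intro!: nth_equalityI)
  qed
  also have "\<dots> = sk_comb ?X (sandwich_diag_weight n F \<kappa> \<rho>) (sandwich_key n)"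
    using sk_even_finite[OF F_even]
    by (intro sk_comb_restrict[symmetric]) (auto simp: D_def sandwich_diag_weight_def)
  finally show ?thesis .
qed

lemma xsum_sandwich_times_e:
  assumes F_even: "sk_even n F" and \<mu>: "\<mu> ^ n = 1" and \<nu>: "\<nu> ^ n = 1"
  shows "sk_add (sk_mult n (sk_xsum n \<mu>) (sk_mult n (times_e n F (\<rho> * \<nu>)) (sk_xsum n \<nu>)))
                (sk_mult n (sk_xsum n \<nu>) (sk_mult n (times_e n F (\<rho> * \<mu>)) (sk_xsum n \<mu>)))
         = times_e n (sk_mult n (sk_sqsum n (\<mu> * \<nu>)) F) \<rho>"
proof -
  let ?X = "{..<n} \<times> (({p. F p \<noteq> 0} \<times> {..<n}) \<times> {..<n})"
  let ?W1 = "sandwich_weight n F \<mu> \<nu> (\<rho> * \<nu>)" and ?W2 = "sandwich_weight n F \<nu> \<mu> (\<rho> * \<mu>)"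
  let ?K = "sandwich_key n"
  define h where
    "h = (\<lambda>(i::nat,((p::skey,s::nat),l::nat)). ((l + s) mod n, ((p,s), (i + n - s) mod n)))"
  have h: "bij_betw h ?X ?X"
    by (rule bij_betw_byWitness[where f' = h])
       (auto simp: h_def sub_add_mod_cancel add_sub_mod_cancel)
  have key_h: "?K (h x) = ?K x" if "x \<in> ?X" for x
    using that by (auto simp: h_def sandwich_key_def sub_add_mod_cancel)
  have "sk_add (sk_mult n (sk_xsum n \<mu>) (sk_mult n (times_e n F (\<rho> * \<nu>)) (sk_xsum n \<nu>)))
                (sk_mult n (sk_xsum n \<nu>) (sk_mult n (times_e n F (\<rho> * \<mu>)) (sk_xsum n \<mu>)))
      = sk_add (sk_comb ?X ?W1 ?K) (sk_comb ?X ?W2 ?K)"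
    by (simp add: xsum_sandwich_eq_sk_comb[OF F_even])
  also have "sk_comb ?X ?W2 ?K = sk_comb ?X (\<lambda>x. ?W2 (h x)) ?K"
    by (rule sk_comb_reindex[OF h, symmetric]) (auto simp: key_h)
  also have "sk_add (sk_comb ?X ?W1 ?K) \<dots> = sk_comb ?X (\<lambda>x. ?W1 x + ?W2 (h x)) ?K"
    by (rule sk_add_sk_comb)
  also have "\<dots> = sk_comb ?X (sandwich_diag_weight n F (\<mu> * \<nu>) \<rho>) ?K"
    by (rule sk_comb_cong) (auto simp: h_def sandwich_weight_pair[OF \<mu> \<nu>])
  also have "\<dots> = times_e n (sk_mult n (sk_sqsum n (\<mu> * \<nu>)) F) \<rho>"
    by (rule times_e_sqsum_mult_eq_diagonal[OF F_even, symmetric])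
  finally show ?thesis .
qed

section \<open>The ideal generated by \<open>e\<^sub>0\<close>\<close>

lemma sum_times_e_roots:
  fixes \<omega> :: "'k::field_char_0"
  assumes F_even: "sk_even n F" and \<omega>: "\<omega> ^ n = 1"
    and prim: "\<forall>j. 0 < j \<and> j < n \<longrightarrow> \<omega> ^ j \<noteq> 1" and n: "n > 0"
  shows "(\<lambda>m. \<Sum>\<alpha><n. times_e n F (\<omega> ^ \<alpha>) m) = F"
proof (rule ext)
  fix m :: skey
  obtain a s where m: "m = (a,s)" by (metis surj_pair)
  show "(\<Sum>\<alpha><n. times_e n F (\<omega> ^ \<alpha>) m) = F m"
  proof (cases "s < n")
    case False
    then have "F (a,s) = 0" using sk_evenD[OF F_even, of a s] n by (cases "F (a,s) = 0") auto
    then show ?thesis using False by (simp add: m times_e_def)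
  next
    case True
    have "(\<Sum>\<alpha><n. times_e n F (\<omega> ^ \<alpha>) m)
        = F (a,0) / of_nat n * (\<Sum>\<alpha><n. (\<omega> ^ s) ^ \<alpha>)"
      using True by (simp add: m times_e_def sum_distrib_left power_mult[symmetric] mult.commute)
    also have "\<dots> = F m"
    proof (cases "s = 0")
      case True then show ?thesis using n by (simp add: m)
    next
      case False
      then have ne: "\<omega> ^ s \<noteq> 1" using prim \<open>s < n\<close> by auto
      have "(\<Sum>\<alpha><n. (\<omega> ^ s) ^ \<alpha>) = ((\<omega> ^ s) ^ n - 1) / (\<omega> ^ s - 1)"
        using ne by (rule geometric_sum)
      also have "\<dots> = 0" by (simp add: power_mult[symmetric] mult.commute power_mult \<omega>)
      finally have "(\<Sum>\<alpha><n. (\<omega> ^ s) ^ \<alpha>) = 0" .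
      moreover have "F (a,s) = 0"
        using sk_evenD[OF F_even, of a s] False by (cases "F (a,s) = 0") auto
      ultimately show ?thesis by (simp add: m)
    qed
    finally show ?thesis .
  qed
qed

lemma sk_ideal_sum:
  "(\<And>\<alpha>. \<alpha> < j \<Longrightarrow> G \<alpha> \<in> sk_ideal n g) \<Longrightarrow> (\<lambda>m. \<Sum>\<alpha><(j::nat). G \<alpha> m) \<in> sk_ideal n g"
proof (induction j)
  case 0
  then show ?case using sk_ideal.zero[of n g] by simp
next
  case (Suc j)
  have "(\<lambda>m. \<Sum>\<alpha><Suc j. G \<alpha> m) = sk_add (\<lambda>m. \<Sum>\<alpha><j. G \<alpha> m) (G j)"
    by (simp add: sk_add_def)
  then show ?case using Suc by (simp add: sk_ideal.add)
qed

lemma sk_ideal_if_times_e_roots: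
  fixes \<omega> :: "'k::field_char_0"
  assumes "sk_even n F" "\<omega> ^ n = 1" "\<forall>j. 0 < j \<and> j < n \<longrightarrow> \<omega> ^ j \<noteq> 1" "n > 0"
    and "\<And>\<alpha>. \<alpha> < n \<Longrightarrow> times_e n F (\<omega> ^ \<alpha>) \<in> sk_ideal n g"
  shows "F \<in> sk_ideal n g"
  using sk_ideal_sum[of n "\<lambda>\<alpha>. times_e n F (\<omega> ^ \<alpha>)"] sum_times_e_roots[OF assms(1-4)] assms(5)
  by simp

lemma sqsum_mult_times_e_in_ideal:
  assumes "n > 0" "sk_even n F" "times_e n F \<rho> \<in> sk_ideal n g"
  shows "times_e n (sk_mult n (sk_sqsum n \<kappa>) F) \<rho> \<in> sk_ideal n g"
  using sk_ideal.left[OF sk_sqsum_carrier[OF assms(1), of \<kappa>] assms(3)]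
  by (simp add: sqsum_mult_times_e[OF assms(2)])

lemma times_e_mult_sqsum_in_ideal:
  assumes "n > 0" "sk_even n F" "\<kappa> ^ n = 1" "times_e n F (\<rho> * \<kappa>) \<in> sk_ideal n g"
  shows "times_e n (sk_mult n (sk_sqsum n \<kappa>) F) \<rho> \<in> sk_ideal n g"
  using sk_ideal.right[OF sk_sqsum_carrier[OF assms(1), of \<kappa>] assms(4)]
  by (simp add: times_e_mult_sqsum[OF assms(2,3)])

lemma xsum_sandwich_times_e_in_ideal:
  assumes "n > 0" "sk_even n F" "\<mu> ^ n = 1" "\<nu> ^ n = 1"
    and "times_e n F (\<rho> * \<nu>) \<in> sk_ideal n g" "times_e n F (\<rho> * \<mu>) \<in> sk_ideal n g"
  shows "times_e n (sk_mult n (sk_sqsum n (\<mu> * \<nu>)) F) \<rho> \<in> sk_ideal n g"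
proof -
  have "sk_add (sk_mult n (sk_xsum n \<mu>) (sk_mult n (times_e n F (\<rho> * \<nu>)) (sk_xsum n \<nu>)))
               (sk_mult n (sk_xsum n \<nu>) (sk_mult n (times_e n F (\<rho> * \<mu>)) (sk_xsum n \<mu>)))
        \<in> sk_ideal n g"
    using assms(1,5,6) by (intro sk_ideal.add sk_ideal.left sk_ideal.right sk_xsum_carrier)
  then show ?thesis by (simp add: xsum_sandwich_times_e[OF assms(2-4)])
qed

lemma sk_pow_Suc: "sk_pow n f (Suc N) = sk_mult n f (sk_pow n f N)"
  by (simp add: sk_pow_def)

lemma sk_even_sqsum_pow: "sk_even n (sk_pow n (sk_sqsum n \<kappa>) N)"
proof (induction N)
  case 0
  show ?case by (simp add: sk_pow_def sk_even_one)
next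
  case (Suc N)
  then show ?case by (simp add: sk_pow_Suc sk_even_sqsum_mult)
qed

lemma eventually_times_e_sqsum_pow_in_ideal:
  fixes \<omega> :: "'k::field"
  assumes n: "n > 0" and \<omega>: "\<omega> ^ n = 1" and gcd: "gcd k n = 2 ^ m"
  shows "\<forall>\<^sub>F N in sequentially.
    times_e n (sk_pow n (sk_sqsum n (\<omega> ^ k)) N) (\<omega> ^ \<alpha>) \<in> sk_ideal n (sk_e n \<omega> 0)"
proof -
  let ?F = "sk_pow n (sk_sqsum n (\<omega> ^ k))" and ?I = "sk_ideal n (sk_e n \<omega> 0)"
  let ?P = "\<lambda>N \<alpha>. times_e n (?F N) (\<omega> ^ \<alpha>) \<in> ?I"
  note even = sk_even_sqsum_pow[of n "\<omega> ^ k"]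
  have root: "(\<omega> ^ a) ^ n = 1" for a by (rule power_pow_eq_1[OF \<omega>])
  show ?thesis
  proof (rule residue_closure_all[OF n gcd, where T = "\<lambda>\<alpha>. \<forall>\<^sub>F N in sequentially. ?P N \<alpha>"])
    fix \<alpha> \<beta> :: nat
    assume "\<alpha> mod n = \<beta> mod n" "\<forall>\<^sub>F N in sequentially. ?P N \<alpha>"
    then show "\<forall>\<^sub>F N in sequentially. ?P N \<beta>" by (metis power_mod_eq_power[OF \<omega>])
  next
    have "?P N 0" for N
    proof (induction N)
      case 0
      show ?case
        using sk_ideal.gen by (simp add: sk_pow_def sk_e_0_eq_times_e[of n \<omega>, symmetric])
    next
      case (Suc N)
      then show ?case by (simp add: sk_pow_Suc sqsum_mult_times_e_in_ideal[OF n even])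
    qed
    then show "\<forall>\<^sub>F N in sequentially. ?P N 0" by simp
  next
    fix \<alpha> assume "\<forall>\<^sub>F N in sequentially. ?P N (\<alpha> + k)"
    then have "\<forall>\<^sub>F N in sequentially. ?P (Suc N) \<alpha>"
      by (rule eventually_mono)
         (simp add: sk_pow_Suc power_add times_e_mult_sqsum_in_ideal[OF n even root])
    then show "\<forall>\<^sub>F N in sequentially. ?P N \<alpha>"
      using eventually_sequentially_Suc[of "\<lambda>N. ?P N \<alpha>"] by simp
  next
    fix \<alpha> d d'
    assume ev: "\<forall>\<^sub>F N in sequentially. ?P N (\<alpha> + d)" "\<forall>\<^sub>F N in sequentially. ?P N (\<alpha> + d')"
      and dd': "(d + d') mod n = k mod n"
    have "\<omega> ^ d * \<omega> ^ d' = \<omega> ^ k"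
      by (metis dd' power_add power_mod_eq_power[OF \<omega>])
    then have step: "?P (Suc N) \<alpha>" if "?P N (\<alpha> + d)" "?P N (\<alpha> + d')" for N
      using xsum_sandwich_times_e_in_ideal[OF n even root[of d] root[of d'], where \<rho> = "\<omega> ^ \<alpha>"]
        that
      by (simp add: sk_pow_Suc power_add)
    have "\<forall>\<^sub>F N in sequentially. ?P (Suc N) \<alpha>"
      using eventually_conj[OF ev] by (rule eventually_mono) (use step in auto)
    then show "\<forall>\<^sub>F N in sequentially. ?P N \<alpha>"
      using eventually_sequentially_Suc[of "\<lambda>N. ?P N \<alpha>"] by simp
  qed
qed

theorem proposition2p3:
  fixes n k :: nat and \<omega> :: "'k::{alg_closed_field, field_char_0}"
  assumes "n \<ge> 2"
    and "\<omega> ^ n = 1" and "\<forall>j. 0 < j \<and> j < n \<longrightarrow> \<omega> ^ j \<noteq> 1"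
    and "k \<le> n - 1"
    and "\<exists>m. gcd k n = 2 ^ m"
  shows "\<exists>N. sk_pow n (sk_c n \<omega> k) N \<in> sk_ideal n (sk_e n \<omega> 0)"
proof -
  have n: "n > 0" using assms(1) by simp
  obtain m where gcd: "gcd k n = 2 ^ m" using assms(5) by blast
  let ?F = "sk_pow n (sk_sqsum n (\<omega> ^ k))" and ?I = "sk_ideal n (sk_e n \<omega> 0)"
  have "\<forall>\<^sub>F N in sequentially. \<forall>\<alpha>\<in>{..<n}. times_e n (?F N) (\<omega> ^ \<alpha>) \<in> ?I"
    using eventually_times_e_sqsum_pow_in_ideal[OF n assms(2) gcd]
    by (simp add: eventually_ball_finite)
  then obtain N where "\<forall>\<alpha><n. times_e n (?F N) (\<omega> ^ \<alpha>) \<in> ?I"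
    by (auto simp: eventually_sequentially)
  then have "?F N \<in> ?I"
    by (intro sk_ideal_if_times_e_roots[OF sk_even_sqsum_pow assms(2,3) n]) auto
  then show ?thesis by (auto simp: sk_c_eq_sqsum)
qed

end
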